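(* Let $K\ge1$, $\delta\in(0,1)$, parameters $\theta_i\in\Theta_i$ for $i\in[K]$, and data $\mathbf X=(X_1,\dots,X_K)$ with arbitrary dependence. For each $i$ let $(E_i(\theta))_{\theta\in\Theta_i}$ be a family of e-values ($E_i(\theta)\ge0$, $\mathbb{E}[E_i(\theta)]\le1$ whenever $\theta$ is the true value of $\theta_i$) with associated e-CIs $C_i(\alpha)=\{\theta\in\Theta_i:E_i(\theta)<1/\alpha\}$. Let $w_1,\dots,w_K\ge0$ be fixed weights with $\sum_{i=1}^K w_i\le K$, let $S=\mathcal S(\mathbf X)$ for an arbitrary selection rule $\mathcal S$, and for each $i\in S$ report $C_i(w_i\delta|S|/K)$. Then $$\mathrm{FCR}=\mathbb{E}\left[\frac{\sum_{i\in S}\mathbf 1\{\theta_i\notin C_i(w_i\delta|S|/K)\}}{|S|\vee1}\right]\le\delta.$$ *)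

theory Defs
  imports "HOL-Probability.Probability"
begin

text \<open>e-confidence interval C(alpha) = {theta in Theta. E(theta) < 1/alpha}, evaluated at outcome omega.
  For alpha <= 0 we use the convention 1/0 = infinity, i.e. the whole parameter set.\<close>
definition eCI :: "'p set \<Rightarrow> ('p \<Rightarrow> 'a \<Rightarrow> real) \<Rightarrow> real \<Rightarrow> 'a \<Rightarrow> 'p set" where
  "eCI \<Theta> E \<alpha> \<omega> = (if \<alpha> > 0 then {\<theta>\<in>\<Theta>. E \<theta> \<omega> < 1 / \<alpha>} else \<Theta>)"

end

theory Submission
  imports Defs
begin

text \<open>For an e-value \<open>E\<close>, missing the e-CI at level \<open>\<alpha>\<close> means \<open>E \<ge> 1/\<alpha>\<close>, so the miss indicator
  is bounded pointwise by \<open>\<alpha> E\<close>. For \<open>i \<in> S\<close> the level is \<open>w\<^sub>i \<delta> |S| / K\<close>; the factor \<open>|S|\<close> cancels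
  against the FCR denominator, so the false coverage proportion is at most
  \<open>\<delta>/K \<Sum>\<^sub>i w\<^sub>i E\<^sub>i(\<theta>\<^sub>i)\<close> whatever the selection, and this has expectation at most \<open>\<delta>\<close>.\<close>

lemma eCI_miss_le_evalue:
  fixes E :: "'p \<Rightarrow> 'a \<Rightarrow> real"
  assumes "\<theta> \<in> \<Theta>" "0 \<le> \<alpha>" "0 \<le> E \<theta> \<omega>"
  shows "(if \<theta> \<notin> eCI \<Theta> E \<alpha> \<omega> then 1 else 0) \<le> \<alpha> * E \<theta> \<omega>"
proof (cases "\<alpha> > 0 \<and> \<theta> \<notin> eCI \<Theta> E \<alpha> \<omega>")
  case True
  then have "1 / \<alpha> \<le> E \<theta> \<omega>" and "\<alpha> > 0"
    using assms(1) by (auto simp: eCI_def)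
  then show ?thesis
    using True by (simp add: divide_le_eq mult.commute)
next
  case False
  then show ?thesis
    using assms by (auto simp: eCI_def)
qed

lemma false_coverage_proportion_le_weighted_evalues:
  fixes E :: "'i \<Rightarrow> 'p \<Rightarrow> 'a \<Rightarrow> real" and K \<delta> :: real
  assumes "finite I" "S \<subseteq> I" "0 \<le> \<delta>" "0 < K"
    and "\<And>i. i \<in> I \<Longrightarrow> \<theta> i \<in> \<Theta> i"
    and "\<And>i. i \<in> I \<Longrightarrow> 0 \<le> w i"
    and "\<And>i. i \<in> I \<Longrightarrow> 0 \<le> E i (\<theta> i) \<omega>"
  shows "(\<Sum>i\<in>S. if \<theta> i \<notin> eCI (\<Theta> i) (E i) (w i * \<delta> * real (card S) / K) \<omega> then 1 else 0)
           / real (max (card S) 1)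
         \<le> \<delta> / K * (\<Sum>i\<in>I. w i * E i (\<theta> i) \<omega>)"
proof (cases "S = {}")
  case True
  then show ?thesis
    using assms by (simp add: sum_nonneg)
next
  case False
  let ?s = "real (card S)"
  have "finite S"
    using assms(1,2) finite_subset by blast
  with False have s_pos: "?s > 0"
    by (simp add: card_gt_0_iff)
  have "(\<Sum>i\<in>S. if \<theta> i \<notin> eCI (\<Theta> i) (E i) (w i * \<delta> * ?s / K) \<omega> then 1 else 0)
        \<le> (\<Sum>i\<in>S. w i * \<delta> * ?s / K * E i (\<theta> i) \<omega>)"
    using assms(2-7) by (intro sum_mono eCI_miss_le_evalue) auto
  also have "\<dots> = ?s * (\<delta> / K * (\<Sum>i\<in>S. w i * E i (\<theta> i) \<omega>))"
    by (simp add: sum_distrib_left algebra_simps)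
  also have "\<dots> \<le> ?s * (\<delta> / K * (\<Sum>i\<in>I. w i * E i (\<theta> i) \<omega>))"
    using assms s_pos by (intro mult_left_mono sum_mono2) auto
  finally show ?thesis
    using False \<open>finite S\<close> s_pos by (simp add: divide_le_eq mult.commute)
qed

lemma integral_weighted_sum_le_sum_weights:
  fixes X :: "'i \<Rightarrow> 'a \<Rightarrow> real"
  assumes "\<And>i. i \<in> I \<Longrightarrow> integrable M (X i)"
    and "\<And>i. i \<in> I \<Longrightarrow> (\<integral>\<omega>. X i \<omega> \<partial>M) \<le> 1"
    and "\<And>i. i \<in> I \<Longrightarrow> 0 \<le> w i"
  shows "(\<integral>\<omega>. (\<Sum>i\<in>I. w i * X i \<omega>) \<partial>M) \<le> (\<Sum>i\<in>I. w i)"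
proof -
  have "(\<integral>\<omega>. (\<Sum>i\<in>I. w i * X i \<omega>) \<partial>M) = (\<Sum>i\<in>I. w i * (\<integral>\<omega>. X i \<omega> \<partial>M))"
    using assms(1) by (simp add: integral_sum)
  also have "\<dots> \<le> (\<Sum>i\<in>I. w i)"
    using assms(2,3) by (intro sum_mono) (simp add: mult_left_le)
  finally show ?thesis .
qed

theorem theorem5:
  fixes M :: "'a measure" and K :: nat and \<delta> :: real
    and \<Theta> :: "nat \<Rightarrow> 'p set" and \<theta> :: "nat \<Rightarrow> 'p"
    and E :: "nat \<Rightarrow> 'p \<Rightarrow> 'a \<Rightarrow> real"
    and w :: "nat \<Rightarrow> real" and S :: "'a \<Rightarrow> nat set"
  assumes "prob_space M"
    and "K \<ge> 1" and "0 < \<delta>" and "\<delta> < 1"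
    and "\<And>i. i \<in> {1..K} \<Longrightarrow> \<theta> i \<in> \<Theta> i"
    and "\<And>i t. i \<in> {1..K} \<Longrightarrow> t \<in> \<Theta> i \<Longrightarrow> E i t \<in> borel_measurable M"
    and "\<And>i t \<omega>. i \<in> {1..K} \<Longrightarrow> t \<in> \<Theta> i \<Longrightarrow> \<omega> \<in> space M \<Longrightarrow> E i t \<omega> \<ge> 0"
    and "\<And>i. i \<in> {1..K} \<Longrightarrow> integrable M (E i (\<theta> i))"
    and "\<And>i. i \<in> {1..K} \<Longrightarrow> (\<integral>\<omega>. E i (\<theta> i) \<omega> \<partial>M) \<le> 1"
    and "\<And>i. i \<in> {1..K} \<Longrightarrow> w i \<ge> 0"
    and "(\<Sum>i=1..K. w i) \<le> real K"
    and "\<And>\<omega>. \<omega> \<in> space M \<Longrightarrow> S \<omega> \<subseteq> {1..K}"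
    and "\<And>A. {\<omega> \<in> space M. S \<omega> = A} \<in> sets M"
  shows "(\<integral>\<omega>. (\<Sum>i\<in>S \<omega>. (if \<theta> i \<notin> eCI (\<Theta> i) (E i) (w i * \<delta> * real (card (S \<omega>)) / real K) \<omega> then 1 else 0))
            / real (max (card (S \<omega>)) 1) \<partial>M) \<le> \<delta>"
proof -
  let ?mix = "\<lambda>\<omega>. \<delta> / real K * (\<Sum>i=1..K. w i * E i (\<theta> i) \<omega>)"
  have K_pos: "real K > 0"
    using assms(2) by simp
  have E_nonneg: "\<And>i \<omega>. i \<in> {1..K} \<Longrightarrow> \<omega> \<in> space M \<Longrightarrow> 0 \<le> E i (\<theta> i) \<omega>"
    using assms(5,7) by blast
  text \<open>\<open>integral_mono'\<close> needs no measurability of the FCR integrand (a non-integrable function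
    has Bochner integral \<open>0\<close>).\<close>
  have "(\<integral>\<omega>. (\<Sum>i\<in>S \<omega>. (if \<theta> i \<notin> eCI (\<Theta> i) (E i) (w i * \<delta> * real (card (S \<omega>)) / real K) \<omega> then 1 else 0))
            / real (max (card (S \<omega>)) 1) \<partial>M) \<le> (\<integral>\<omega>. ?mix \<omega> \<partial>M)"
  proof (rule integral_mono')
    show "integrable M ?mix"
      using assms(8) by (intro integrable_mult_right integrable_sum) auto
    show "0 \<le> ?mix \<omega>" if "\<omega> \<in> space M" for \<omega>
      using that assms(3,10) E_nonneg K_pos by (intro mult_nonneg_nonneg sum_nonneg) auto
  qed (use assms(3,5,10,12) E_nonneg K_pos in \<open>intro false_coverage_proportion_le_weighted_evalues; auto\<close>)
  also have "\<dots> = \<delta> / real K * (\<integral>\<omega>. (\<Sum>i=1..K. w i * E i (\<theta> i) \<omega>) \<partial>M)"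
    by simp
  also have "\<dots> \<le> \<delta> / real K * real K"
    using assms(3,8-11) K_pos
    by (intro mult_left_mono order.trans[OF integral_weighted_sum_le_sum_weights]) auto
  also have "\<dots> = \<delta>"
    using K_pos by simp
  finally show ?thesis .
qed

end
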